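(* Let $A$ be an $n\times n$ Dickson matrix over $\mathbb{F}_{q^n}$ and, for $1\le k\le n$, let $A_{k-1}=A[\{0,1,\dots,k-1\}|\{0,1,\dots,k-1\}]$. Then $\mathrm{rank}\,A=\max\{k\in\{1,\dots,n\}:\det A_{k-1}\neq 0\}$ (with the value $0$ if no such $k$ exists).
   Context: Rows and columns are indexed by $\mathbb{Z}_n$. A Dickson matrix is the matrix $A$ with $A[i|j]=a_{j-i}^{q^i}$ (indices mod $n$) associated to a $q$-polynomial $\sum_{j=0}^{n-1}a_jx^{q^j}\in\mathbb{F}_{q^n}[x]$. $A[\alpha|\beta]$ denotes the submatrix with rows $\alpha$ and columns $\beta$. *)

theory Defs
  imports "Jordan_Normal_Form.DL_Rank" "Jordan_Normal_Form.DL_Submatrix"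
    "HOL-Computational_Algebra.Primes"
begin

text \<open>Dickson matrix of the q-polynomial sum_{j<n} a_j x^(q^j) over a field:
  entry (i,j) is a_((j - i) mod n)^(q^i), rows/columns indexed by 0..n-1.\<close>
definition dickson_mat :: "nat \<Rightarrow> nat \<Rightarrow> (nat \<Rightarrow> 'a::field) \<Rightarrow> 'a mat" where
  "dickson_mat q n a = mat n n (\<lambda>(i, j). a ((j + n - i) mod n) ^ (q ^ i))"

definition lead_submat :: "'a mat \<Rightarrow> nat \<Rightarrow> 'a mat" where
  "lead_submat A k = submatrix A {0..<k} {0..<k}"

end

theory Submission
  imports Defs "Jordan_Normal_Form.DL_Rank_Submatrix" "HOL-Number_Theory.Residues"
begin

text \<open>Column \<open>j + 1\<close> of a Dickson matrix is column \<open>j\<close> with its rows cyclically shifted and the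
  Frobenius \<open>x \<mapsto> x\<^sup>q\<close> applied entrywise, and the same holds for rows. Applying this semilinear
  shift to a linear relation shows that once a column depends on its predecessors, so do all later
  columns; hence the rank is at most the index \<open>k\<^sub>C\<close> of the first dependent column, and likewise
  at most the index \<open>k\<^sub>R\<close> of the first dependent row. For \<open>m = min k\<^sub>C k\<^sub>R\<close> the leading
  \<open>m \<times> m\<close> minor is nonzero: were it singular, its kernel vector would, as all rows are
  combinations of the first \<open>m\<close> rows, give a relation among the first \<open>m\<close> columns (or dually).
  So the rank is \<open>m\<close>, and since a nonzero minor never exceeds the rank, \<open>m\<close> is the largest
  size of a nonzero leading minor.\<close>

lemma finite_field_power_card_eq_self:
  fixes x :: "'a::{field,finite}"
  shows "x ^ card (UNIV :: 'a set) = x"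
proof (cases "x = 0")
  case True
  then show ?thesis
    by (simp add: finite_UNIV_card_ge_0)
next
  case False
  define U where "U = UNIV - {0::'a}"
  have "(\<Prod>y\<in>U. x * y) = (\<Prod>y\<in>U. y)"
    by (rule prod.reindex_bij_witness[of _ "\<lambda>y. y / x" "\<lambda>y. x * y"])
       (use False in \<open>auto simp: U_def\<close>)
  then have "x ^ card U * \<Prod>U = \<Prod>U"
    by (simp add: prod.distrib)
  moreover have "\<Prod>U \<noteq> 0"
    by (simp add: U_def)
  ultimately have "x ^ card U = 1"
    by simp
  moreover have "card (UNIV :: 'a set) = Suc (card U)"
    by (simp add: U_def card_Diff_singleton finite_UNIV_card_ge_0)
  ultimately show ?thesis
    by simp
qed

lemma CHAR_eq_prime_if_card_eq_power:
  assumes "prime p" and "card (UNIV :: 'a::{field,finite} set) = p ^ e"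
  shows "CHAR('a) = p"
proof -
  have "prime CHAR('a)"
    by (simp add: finite_imp_CHAR_pos prime_CHAR_semidom)
  moreover have "CHAR('a) dvd p ^ e"
    using CHAR_dvd_CARD[where 'a='a] assms(2) by simp
  ultimately show ?thesis
    using assms(1) prime_dvd_power primes_dvd_imp_eq by blast
qed

lemma frobenius_power_semiring_hom:
  assumes "prime CHAR('a::comm_ring_1)"
  shows "semiring_hom (\<lambda>x::'a. x ^ (CHAR('a) ^ m))"
proof -
  have "CHAR('a) > 0"
    using assms prime_gt_0_nat by blast
  then show ?thesis
    by unfold_locales (simp_all add: assms freshmans_dream' power_mult_distrib power_0_left)
qed

text \<open>Matrices are handled through their entry functions \<open>F i j\<close>; \<open>n\<close> is the number of rows.\<close>

definition in_span_cols :: "(nat \<Rightarrow> nat \<Rightarrow> 'a::field) \<Rightarrow> nat \<Rightarrow> nat \<Rightarrow> (nat \<Rightarrow> 'a) \<Rightarrow> bool" where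
  "in_span_cols F n k v \<longleftrightarrow> (\<exists>c. \<forall>i<n. v i = (\<Sum>l<k. c l * F i l))"

definition first_dependent_col :: "(nat \<Rightarrow> nat \<Rightarrow> 'a::field) \<Rightarrow> nat \<Rightarrow> nat" where
  "first_dependent_col F n = (LEAST k. k = n \<or> k < n \<and> in_span_cols F n k (\<lambda>i. F i k))"

lemma in_span_cols_cong:
  "in_span_cols F n k v \<Longrightarrow> (\<And>i. i < n \<Longrightarrow> v i = w i) \<Longrightarrow> in_span_cols F n k w"
  unfolding in_span_cols_def by metis

lemma in_span_cols_col: "j < k \<Longrightarrow> in_span_cols F n k (\<lambda>i. F i j)"
  unfolding in_span_cols_def
  by (rule exI[of _ "\<lambda>l. if l = j then 1 else 0"]) (simp add: if_distrib[of "\<lambda>c. c * _"] cong: if_cong)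

lemma in_span_cols_sum:
  assumes "finite L" and "\<And>l. l \<in> L \<Longrightarrow> in_span_cols F n k (g l)"
  shows "in_span_cols F n k (\<lambda>i. \<Sum>l\<in>L. c l * g l i)"
  using assms
proof (induction L rule: finite_induct)
  case empty
  show ?case
    unfolding in_span_cols_def by (rule exI[of _ "\<lambda>_. 0"]) simp
next
  case (insert l L)
  obtain x where x: "\<forall>i<n. (\<Sum>l\<in>L. c l * g l i) = (\<Sum>t<k. x t * F i t)"
    using insert unfolding in_span_cols_def by force
  obtain y where y: "\<forall>i<n. g l i = (\<Sum>t<k. y t * F i t)"
    using insert.prems[of l] unfolding in_span_cols_def by force
  show ?case
    unfolding in_span_cols_def
    by (rule exI[of _ "\<lambda>t. x t + c l * y t"])
       (simp add: insert x y sum.distrib sum_distrib_left algebra_simps)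
qed

lemma in_span_cols_choice:
  assumes "\<And>j. j < N \<Longrightarrow> in_span_cols F n k (V j)"
  obtains c where "\<forall>j<N. \<forall>i<n. V j i = (\<Sum>l<k. c j l * F i l)"
proof -
  have "\<forall>j. \<exists>c. j < N \<longrightarrow> (\<forall>i<n. V j i = (\<Sum>l<k. c l * F i l))"
    using assms unfolding in_span_cols_def by blast
  from choice[OF this] show ?thesis
    using that by blast
qed

lemma first_dependent_col_le: "first_dependent_col F n \<le> n"
  unfolding first_dependent_col_def by (rule Least_le) simp

lemma in_span_cols_first_dependent_col:
  "first_dependent_col F n < n \<Longrightarrow>
    in_span_cols F n (first_dependent_col F n) (\<lambda>i. F i (first_dependent_col F n))"
  using LeastI[of "\<lambda>k. k = n \<or> k < n \<and> in_span_cols F n k (\<lambda>i. F i k)" n]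
  unfolding first_dependent_col_def by auto

lemma not_in_span_cols_before_first_dependent_col:
  "t < first_dependent_col F n \<Longrightarrow> \<not> in_span_cols F n t (\<lambda>i. F i t)"
  using not_less_Least[of t "\<lambda>k. k = n \<or> k < n \<and> in_span_cols F n k (\<lambda>i. F i k)"]
    first_dependent_col_le[of F n]
  unfolding first_dependent_col_def by auto

text \<open>If column \<open>j + 1\<close> is obtained from column \<open>j\<close> by permuting rows and applying a ring
  endomorphism \<open>\<phi>\<close>, then applying the same operation to a linear relation expressing column \<open>k\<close>
  through columns \<open>0..k-1\<close> expresses column \<open>k + 1\<close> through columns \<open>1..k\<close>, hence again through
  columns \<open>0..k-1\<close>.\<close>

lemma in_span_cols_first_dependent_col_if_shift:
  fixes F :: "nat \<Rightarrow> nat \<Rightarrow> 'a::field"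
  assumes hom: "semiring_hom \<phi>"
    and \<sigma>: "\<And>i. i < n \<Longrightarrow> \<sigma> i < n"
    and shift: "\<And>i j. i < n \<Longrightarrow> Suc j < n \<Longrightarrow> F i (Suc j) = \<phi> (F (\<sigma> i) j)"
    and "j < n"
  shows "in_span_cols F n (first_dependent_col F n) (\<lambda>i. F i j)"
proof -
  interpret semiring_hom \<phi> by (fact hom)
  define k where "k = first_dependent_col F n"
  have "in_span_cols F n k (\<lambda>i. F i (k + d))" if "k + d < n" for d
    using that
  proof (induction d)
    case 0
    then show ?case
      using in_span_cols_first_dependent_col[of F n] by (simp add: k_def)
  next
    case (Suc d)
    then obtain c where c: "\<forall>i<n. F i (k + d) = (\<Sum>l<k. c l * F i l)"
      unfolding in_span_cols_def by auto
    have shifted_cols: "in_span_cols F n k (\<lambda>i. F i (Suc l))" if "l < k" for l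
    proof (cases "Suc l < k")
      case True
      then show ?thesis by (rule in_span_cols_col)
    next
      case False
      with that have "Suc l = k"
        by simp
      with Suc.prems show ?thesis
        using in_span_cols_first_dependent_col[of F n] by (simp add: k_def)
    qed
    have "in_span_cols F n k (\<lambda>i. \<Sum>l<k. \<phi> (c l) * F i (Suc l))"
      by (rule in_span_cols_sum) (simp_all add: shifted_cols)
    then show ?case
    proof (rule in_span_cols_cong)
      fix i assume "i < n"
      then have "F i (k + Suc d) = \<phi> (\<Sum>l<k. c l * F (\<sigma> i) l)"
        using shift \<sigma> c Suc.prems by simp
      also have "\<dots> = (\<Sum>l<k. \<phi> (c l) * F i (Suc l))"
        using shift \<open>i < n\<close> Suc.prems by (simp add: hom_sum hom_mult)
      finally show "(\<Sum>l<k. \<phi> (c l) * F i (Suc l)) = F i (k + Suc d)"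
        by simp
    qed
  qed
  from this[of "j - k"] \<open>j < n\<close> show ?thesis
    by (cases "j < k") (simp_all add: in_span_cols_col k_def)
qed

lemma rank_le_sum_of_products:
  "vec_space.rank n (mat n nc (\<lambda>(i,j). \<Sum>l<k. g l i * (h l j :: 'a::field))) \<le> k"
proof (induction k)
  case 0
  have "mat n nc (\<lambda>(i,j). \<Sum>l<0. g l i * (h l j :: 'a)) = 0\<^sub>m n nc"
    by (rule eq_matI) auto
  then show ?case
    by (simp only: vec_space.rank_0I)
next
  case (Suc k)
  have split: "mat n nc (\<lambda>(i,j). \<Sum>l<Suc k. g l i * h l j) =
      mat n nc (\<lambda>(i,j). \<Sum>l<k. g l i * h l j) + mat n nc (\<lambda>(i,j). g k i * h k j)"
    by (rule eq_matI) simp_all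
  have "vec_space.rank n (mat n nc (\<lambda>(i,j). g k i * (h k j :: 'a))) \<le> 1"
    by (rule vec_space.rank_le_1_product_entries[where f="g k" and g="h k" and nc=nc]) simp_all
  moreover have "vec_space.rank n (mat n nc (\<lambda>(i,j). \<Sum>l<Suc k. g l i * h l j))
      \<le> vec_space.rank n (mat n nc (\<lambda>(i,j). \<Sum>l<k. g l i * h l j))
        + vec_space.rank n (mat n nc (\<lambda>(i,j). g k i * (h k j :: 'a)))"
    unfolding split by (rule vec_space.rank_subadditive[where nc=nc]) simp_all
  ultimately show ?case
    using Suc.IH by linarith
qed

lemma rank_le_if_cols_in_span:
  assumes "\<And>j. j < nc \<Longrightarrow> in_span_cols F n k (\<lambda>i. F i j)"
  shows "vec_space.rank n (mat n nc (\<lambda>(i,j). F i j)) \<le> k"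
proof -
  obtain c where c: "\<forall>j<nc. \<forall>i<n. F i j = (\<Sum>l<k. c j l * F i l)"
    by (rule in_span_cols_choice[OF assms])
  have "mat n nc (\<lambda>(i,j). F i j) = mat n nc (\<lambda>(i,j). \<Sum>l<k. F i l * c j l)"
    by (rule eq_matI) (simp_all add: c mult.commute)
  then show ?thesis
    using rank_le_sum_of_products[where g="\<lambda>l i. F i l" and h="\<lambda>l j. c j l"] by simp
qed

lemma rank_le_if_rows_in_span:
  assumes "\<And>i. i < n \<Longrightarrow> in_span_cols (\<lambda>j i. F i j) nc k (\<lambda>j. F i j)"
  shows "vec_space.rank n (mat n nc (\<lambda>(i,j). F i j)) \<le> k"
proof -
  obtain c where c: "\<forall>i<n. \<forall>j<nc. F i j = (\<Sum>l<k. c i l * F l j)"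
    by (rule in_span_cols_choice[OF assms])
  have "mat n nc (\<lambda>(i,j). F i j) = mat n nc (\<lambda>(i,j). \<Sum>l<k. c i l * F l j)"
    by (rule eq_matI) (simp_all add: c)
  then show ?thesis
    using rank_le_sum_of_products[where g="\<lambda>l i. c i l" and h="\<lambda>l j. F l j"] by simp
qed

lemma ex_col_in_span_prev_if_dependency:
  assumes "\<forall>i<n. (\<Sum>j<m. v j * F i j) = 0" and "j\<^sub>0 < m" and "v j\<^sub>0 \<noteq> 0"
  shows "\<exists>t<m. in_span_cols F n t (\<lambda>i. F i t)"
  using assms
proof (induction m)
  case 0
  then show ?case by simp
next
  case (Suc m)
  show ?case
  proof (cases "v m = 0")
    case True
    then have "\<forall>i<n. (\<Sum>j<m. v j * F i j) = 0" and "j\<^sub>0 < m"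
      using Suc.prems by (auto simp: less_Suc_eq)
    then show ?thesis
      using Suc.IH Suc.prems(3) less_SucI by blast
  next
    case False
    have "in_span_cols F n m (\<lambda>i. F i m)"
      unfolding in_span_cols_def
    proof (intro exI allI impI)
      fix i assume "i < n"
      then have "(\<Sum>j<m. v j * F i j) + v m * F i m = 0"
        using Suc.prems(1) by simp
      with False have "F i m = - (\<Sum>j<m. v j * F i j) / v m"
        by (simp add: field_simps eq_neg_iff_add_eq_0)
      also have "\<dots> = (\<Sum>j<m. - v j / v m * F i j)"
        by (simp add: sum_divide_distrib flip: sum_negf)
      finally show "F i m = (\<Sum>j<m. - v j / v m * F i j)" .
    qed
    then show ?thesis
      by blast
  qed
qed

text \<open>A kernel vector of the leading \<open>m \<times> m\<close> block is orthogonal to every row, since every row is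
  a combination of the first \<open>m\<close> ones; so it is a linear relation among the first \<open>m\<close> columns.\<close>

lemma det_lead_nonzero_if_rows_in_span:
  fixes F :: "nat \<Rightarrow> nat \<Rightarrow> 'a::field"
  assumes rows: "\<And>i. i < n \<Longrightarrow> in_span_cols (\<lambda>j i. F i j) n m (\<lambda>j. F i j)"
    and "m \<le> first_dependent_col F n"
  shows "det (mat m m (\<lambda>(i,j). F i j)) \<noteq> 0"
proof
  assume "det (mat m m (\<lambda>(i,j). F i j)) = 0"
  then obtain v where v: "v \<in> carrier_vec m" "v \<noteq> 0\<^sub>v m" "mat m m (\<lambda>(i,j). F i j) *\<^sub>v v = 0\<^sub>v m"
    using det_0_iff_vec_prod_zero_field[of "mat m m (\<lambda>(i,j). F i j)" m] by auto
  have lead_rows: "(\<Sum>j<m. v $ j * F i j) = 0" if "i < m" for i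
    using arg_cong[OF v(3), of "\<lambda>w. w $ i"] that v(1)
    by (simp add: scalar_prod_def atLeast0LessThan mult.commute)
  obtain c where c: "\<forall>i<n. \<forall>j<n. F i j = (\<Sum>l<m. c i l * F l j)"
    by (rule in_span_cols_choice[OF rows])
  have "m \<le> n"
    using assms(2) first_dependent_col_le[of F n] by linarith
  have all_rows: "(\<Sum>j<m. v $ j * F i j) = 0" if "i < n" for i
  proof -
    have "F i j = (\<Sum>l<m. c i l * F l j)" if "j < m" for j
      using c \<open>i < n\<close> \<open>m \<le> n\<close> that order_less_le_trans by blast
    then have "(\<Sum>j<m. v $ j * F i j) = (\<Sum>j<m. v $ j * (\<Sum>l<m. c i l * F l j))"
      by (intro sum.cong) simp_all
    also have "\<dots> = (\<Sum>j<m. \<Sum>l<m. c i l * (v $ j * F l j))"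
      by (simp add: sum_distrib_left mult_ac)
    also have "\<dots> = (\<Sum>l<m. c i l * (\<Sum>j<m. v $ j * F l j))"
      by (subst sum.swap) (simp add: sum_distrib_left)
    finally show ?thesis
      by (simp add: lead_rows)
  qed
  obtain j\<^sub>0 where "j\<^sub>0 < m" "v $ j\<^sub>0 \<noteq> 0"
    using v(1,2) by (metis carrier_vecD eq_vecI index_zero_vec)
  then obtain t where "t < m" "in_span_cols F n t (\<lambda>i. F i t)"
    using ex_col_in_span_prev_if_dependency[where v="\<lambda>j. v $ j"] all_rows by blast
  then show False
    using not_in_span_cols_before_first_dependent_col[of t F n] assms(2) by simp
qed

lemma det_lead_min_first_dependent_nonzero:
  fixes F :: "nat \<Rightarrow> nat \<Rightarrow> 'a::field" and n :: nat
  defines "m \<equiv> min (first_dependent_col F n) (first_dependent_col (\<lambda>i j. F j i) n)"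
  assumes cols: "\<And>j. j < n \<Longrightarrow> in_span_cols F n (first_dependent_col F n) (\<lambda>i. F i j)"
    and rows: "\<And>i. i < n \<Longrightarrow>
      in_span_cols (\<lambda>i j. F j i) n (first_dependent_col (\<lambda>i j. F j i) n) (\<lambda>j. F i j)"
  shows "det (mat m m (\<lambda>(i,j). F i j)) \<noteq> 0"
proof (cases "first_dependent_col (\<lambda>i j. F j i) n \<le> first_dependent_col F n")
  case True
  then show ?thesis
    using det_lead_nonzero_if_rows_in_span[OF rows True] by (simp add: m_def min_absorb2)
next
  case False
  then have "m = first_dependent_col F n"
    by (simp add: m_def)
  with False have "det (mat m m (\<lambda>(i,j). F j i)) \<noteq> 0"
    using det_lead_nonzero_if_rows_in_span[where F="\<lambda>i j. F j i" and m=m and n=n] cols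
    by simp
  moreover have "mat m m (\<lambda>(i,j). F j i) = transpose_mat (mat m m (\<lambda>(i,j). F i j))"
    by (rule eq_matI) auto
  moreover have "det (transpose_mat (mat m m (\<lambda>(i,j). F i j))) = det (mat m m (\<lambda>(i,j). F i j))"
    by (rule det_transpose) (rule mat_carrier)
  ultimately show ?thesis
    by simp
qed

lemma lead_submat_mat:
  assumes "k \<le> n"
  shows "lead_submat (mat n n f) k = mat k k f"
proof -
  have "{i. i < n \<and> i < k} = {..<k}"
    using assms by auto
  then have card_lead: "card {i. i < n \<and> i < k} = k"
    by simp
  have pick_lead: "pick {0..<k} i = i" if "i < k" for i
  proof -
    have "{a \<in> {0..<k}. a < i} = {0..<i}"
      using that by auto
    then show ?thesis
      using pick_card_in_set[of i "{0..<k}"] that by simp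
  qed
  show ?thesis
    unfolding lead_submat_def
  proof (rule eq_matI)
    fix i j assume "i < dim_row (mat k k f)" and "j < dim_col (mat k k f)"
    then show "submatrix (mat n n f) {0..<k} {0..<k} $$ (i, j) = mat k k f $$ (i, j)"
      using assms by (simp add: submatrix_index card_lead pick_lead)
  qed (simp_all add: dim_submatrix card_lead)
qed

lemma lead_minor_le_rank:
  assumes "A \<in> carrier_mat n n" and "k \<le> n" and "det (lead_submat A k) \<noteq> 0"
  shows "k \<le> vec_space.rank n A"
proof -
  have "{j. j < n \<and> j \<in> {0..<k}} = {0..<k}"
    using assms(2) by auto
  then show ?thesis
    using vec_space.rank_gt_minor[OF assms(1) assms(3)[unfolded lead_submat_def]] by simp
qed

lemma rank_eq_Max_nonzero_lead_minor:
  assumes A: "A \<in> carrier_mat n n" and det: "det (lead_submat A (vec_space.rank n A)) \<noteq> 0"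
  shows "vec_space.rank n A =
    (if \<exists>k\<in>{1..n}. det (lead_submat A k) \<noteq> 0
     then Max {k\<in>{1..n}. det (lead_submat A k) \<noteq> 0} else 0)"
proof -
  let ?r = "vec_space.rank n A" and ?S = "{k\<in>{1..n}. det (lead_submat A k) \<noteq> 0}"
  have le_rank: "k \<le> ?r" if "k \<in> ?S" for k
    using lead_minor_le_rank[OF A] that by simp
  have "?r \<le> n"
    by (rule vec_space.rank_le_nc[OF A])
  show ?thesis
  proof (cases "?r = 0")
    case True
    then show ?thesis
      using le_rank by fastforce
  next
    case False
    with \<open>?r \<le> n\<close> det have "?r \<in> ?S"
      by simp
    then have "Max ?S = ?r"
      by (intro Max_eqI) (auto intro: le_rank)
    with \<open>?r \<in> ?S\<close> show ?thesis
      by auto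
  qed
qed

lemma det_lead_submat_rank_nonzero_if_semilinear_shifts:
  fixes F :: "nat \<Rightarrow> nat \<Rightarrow> 'a::field"
  assumes hom: "semiring_hom \<phi>"
    and \<sigma>: "\<And>i. i < n \<Longrightarrow> \<sigma> i < n" and \<tau>: "\<And>i. i < n \<Longrightarrow> \<tau> i < n"
    and col_shift: "\<And>i j. i < n \<Longrightarrow> Suc j < n \<Longrightarrow> F i (Suc j) = \<phi> (F (\<sigma> i) j)"
    and row_shift: "\<And>i j. i < n \<Longrightarrow> Suc j < n \<Longrightarrow> F (Suc j) i = \<phi> (F j (\<tau> i))"
  shows "det (lead_submat (mat n n (\<lambda>(i,j). F i j)) (vec_space.rank n (mat n n (\<lambda>(i,j). F i j))))
    \<noteq> 0"
proof -
  let ?A = "mat n n (\<lambda>(i,j). F i j)"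
  define m where "m = min (first_dependent_col F n) (first_dependent_col (\<lambda>i j. F j i) n)"
  have cols: "in_span_cols F n (first_dependent_col F n) (\<lambda>i. F i j)" if "j < n" for j
    by (rule in_span_cols_first_dependent_col_if_shift[OF hom \<sigma>]) (simp_all add: col_shift that)
  have rows: "in_span_cols (\<lambda>i j. F j i) n (first_dependent_col (\<lambda>i j. F j i) n) (\<lambda>j. F i j)"
    if "i < n" for i
    by (rule in_span_cols_first_dependent_col_if_shift[OF hom \<tau>]) (simp_all add: row_shift that)
  have det_m: "det (mat m m (\<lambda>(i,j). F i j)) \<noteq> 0"
    unfolding m_def by (rule det_lead_min_first_dependent_nonzero[OF cols rows])
  have "m \<le> n"
    using first_dependent_col_le[of F n] by (simp add: m_def)
  then have "m \<le> vec_space.rank n ?A"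
    using lead_minor_le_rank[of ?A n m] det_m by (simp add: lead_submat_mat)
  moreover have "vec_space.rank n ?A \<le> m"
    using rank_le_if_cols_in_span[OF cols] rank_le_if_rows_in_span[OF rows] by (simp add: m_def)
  ultimately have "vec_space.rank n ?A = m"
    by simp
  with det_m \<open>m \<le> n\<close> show ?thesis
    by (simp add: lead_submat_mat)
qed

lemma dickson_entry_col_shift:
  fixes a :: "nat \<Rightarrow> 'a::monoid_mult"
  assumes "\<And>x::'a. x ^ q ^ n = x" and "i < n" and "Suc j < n"
  shows "a ((Suc j + n - i) mod n) ^ q ^ i
    = (a ((j + n - (i + n - 1) mod n) mod n) ^ q ^ ((i + n - 1) mod n)) ^ q"
proof (cases i)
  case 0
  with assms have "(a (Suc j) ^ q ^ (n - 1)) ^ q = a (Suc j)"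
    by (metis Suc_diff_1 power_Suc2 power_mult bot_nat_0.not_eq_extremum)
  moreover have "Suc (j + n) mod n = Suc j"
    using mod_add_self2[of "Suc j" n] assms(3) by simp
  ultimately show ?thesis
    using 0 assms(3) by (simp add: Suc_diff_Suc)
next
  case (Suc i')
  with assms(2) show ?thesis
    by (simp add: power_mult[symmetric] mult.commute)
qed

lemma dickson_entry_row_shift:
  fixes a :: "nat \<Rightarrow> 'a::monoid_mult"
  assumes "i < n" and "Suc j < n"
  shows "a ((i + n - Suc j) mod n) ^ q ^ Suc j = (a (((i + n - 1) mod n + n - j) mod n) ^ q ^ j) ^ q"
proof -
  have "((i + n - 1) mod n + n - j) mod n = (i + n - Suc j) mod n"
    using assms by (cases i) (auto simp: mod_if)
  then show ?thesis
    by (simp add: power_mult[symmetric] mult.commute)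
qed

theorem mainTheorem7:
  fixes a :: "nat \<Rightarrow> 'a::{field,finite}" and q n :: nat
  assumes "n \<ge> 1"
    and "\<exists>p m. prime p \<and> m \<ge> 1 \<and> q = p ^ m"
    and "card (UNIV :: 'a set) = q ^ n"
  shows "vec_space.rank n (dickson_mat q n a) =
    (if \<exists>k\<in>{1..n}. det (lead_submat (dickson_mat q n a) k) \<noteq> 0
     then Max {k\<in>{1..n}. det (lead_submat (dickson_mat q n a) k) \<noteq> 0}
     else 0)"
proof -
  obtain p e where "prime p" and q: "q = p ^ e"
    using assms(2) by blast
  then have "CHAR('a) = p"
    using CHAR_eq_prime_if_card_eq_power assms(3) by (metis power_mult)
  then have hom: "semiring_hom (\<lambda>x::'a. x ^ q)"
    using frobenius_power_semiring_hom[where 'a='a and m=e] \<open>prime p\<close> q by simp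
  have fermat: "x ^ q ^ n = x" for x :: 'a
    using finite_field_power_card_eq_self[of x] assms(3) by simp
  have "det (lead_submat (dickson_mat q n a) (vec_space.rank n (dickson_mat q n a))) \<noteq> 0"
    unfolding dickson_mat_def
    by (rule det_lead_submat_rank_nonzero_if_semilinear_shifts[OF hom _ _
          dickson_entry_col_shift[OF fermat] dickson_entry_row_shift]) simp_all
  then show ?thesis
    by (rule rank_eq_Max_nonzero_lead_minor[rotated]) (simp add: dickson_mat_def)
qed

end
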